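(* Let $M$ be a $\lambda$-term. If $M$ is typable in the system $E^S_A$ (i.e. some judgment $\Delta\vdash M:a$ is derivable), then the head reduction of $M$ ends.
   Context: $[n]=\{1,\dots,n\}$. Fix a class $\mathcal C$ of functions between finite ordinals equal to one of: all bijections, all injections, all surjections, all functions. For a small category $X$, $SX$ has finite lists of objects of $X$ as objects and morphisms $\langle x_1,\dots,x_n\rangle\to\langle y_1,\dots,y_m\rangle$ the tuples $\langle\alpha,f_1,\dots,f_m\rangle$ with $\alpha:[m]\to[n]$ in $\mathcal C$, $f_i:x_{\alpha(i)}\to y_i$; composite of $\langle\alpha,\vec f\rangle$ then $\langle\beta,\vec g\rangle$ is $\langle\alpha\circ\beta,(g_i\circ f_{\beta(i)})_i\rangle$; tensor $\oplus$ = concatenation, unit $\langle\rangle$. Fix a small category $A$. $D=D_A$ is the colimit of $D_0=A$, $D_{k+1}=(SD_k)^{o}\times D_k\sqcup A$: objects $a::=o\mid\langle a_1,\dots,a_k\rangle\Rightarrow a$ ($o\in\mathrm{Ob}(A)$); morphisms are those of $A$ and $\langle\alpha,\vec f\rangle\Rightarrow f:(\vec a\Rightarrow a)\to(\vec a'\Rightarrow a')$ for $\langle\alpha,\vec f\rangle:\vec a'\to\vec a$ in $SD$, $f:a\to a'$. $SD=S(D_A)$. Contexts are $\Delta=\langle\vec a_1,\dots,\vec a_n\rangle\in(SD)^n$, written $x_1:\vec a_1,\dots,x_n:\vec a_n$; $\otimes$ is componentwise concatenation. Type system $E^S_A$: (Var) given morphisms $f_j:\vec a_j\to\langle\rangle$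 ($j\ne i$) and $f_i:\vec a_i\to\langle a\rangle$ in $SD$, infer $x_1:\vec a_1,\dots,x_n:\vec a_n\vdash x_i:a$; (Abs) from $\Delta,x:\vec a\vdash M:a$ infer $\Delta\vdash\lambda x.M:\vec a\Rightarrow a$; (App) from $\Gamma_0\vdash M:\langle a_1,\dots,a_k\rangle\Rightarrow a$, $\Gamma_i\vdash N:a_i$ ($1\le i\le k$) and a morphism $\eta:\Delta\to\bigotimes_{i=0}^k\Gamma_i$ in $(SD)^n$, infer $\Delta\vdash MN:a$. Head reduction: $H(M)=M$ if $M=\lambda\vec y.\,y\vec N$, and $H(M)=\lambda\vec y.\,P[N/x]\vec N$ if $M=\lambda\vec y.(\lambda x.P)N\vec N$; the head reduction of $M$ ends if iterating $H$ reaches a term $M'$ with $H(M')=M'$. *)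

theory Defs
  imports Main
begin

record ('o, 'm) cat =
  Obj  :: "'o set"
  Hom  :: "'o \<Rightarrow> 'o \<Rightarrow> 'm set"
  Idt  :: "'o \<Rightarrow> 'm"
  Comp :: "'m \<Rightarrow> 'm \<Rightarrow> 'm"   (* Comp g f = g \<circ> f *)

definition is_category :: "('o, 'm) cat \<Rightarrow> bool" where
  "is_category A \<longleftrightarrow>
     (\<forall>x\<in>Obj A. Idt A x \<in> Hom A x x) \<and>
     (\<forall>x\<in>Obj A. \<forall>y\<in>Obj A. \<forall>z\<in>Obj A. \<forall>f\<in>Hom A x y. \<forall>g\<in>Hom A y z.
          Comp A g f \<in> Hom A x z) \<and>
     (\<forall>x\<in>Obj A. \<forall>y\<in>Obj A. \<forall>f\<in>Hom A x y.
          Comp A f (Idt A x) = f \<and> Comp A (Idt A y) f = f) \<and>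
     (\<forall>w\<in>Obj A. \<forall>x\<in>Obj A. \<forall>y\<in>Obj A. \<forall>z\<in>Obj A.
        \<forall>f\<in>Hom A w x. \<forall>g\<in>Hom A x y. \<forall>h\<in>Hom A y z.
          Comp A h (Comp A g f) = Comp A (Comp A h g) f)"

text \<open>A map alpha : [m] \<rightarrow> [n] is represented 0-based as a list of length m
  with entries < n (entry i is the image of i+1, minus 1).\<close>

datatype cls = Bijections | Injections | Surjections | AllFunctions

definition in_C :: "cls \<Rightarrow> nat list \<Rightarrow> nat \<Rightarrow> nat \<Rightarrow> bool" where
  "in_C c \<alpha> m n \<longleftrightarrow> length \<alpha> = m \<and> (\<forall>i<m. \<alpha> ! i < n) \<and>
     (case c of
        Bijections \<Rightarrow> bij_betw (\<lambda>i. \<alpha> ! i) {..<m} {..<n}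
      | Injections \<Rightarrow> inj_on (\<lambda>i. \<alpha> ! i) {..<m}
      | Surjections \<Rightarrow> (\<lambda>i. \<alpha> ! i) ` {..<m} = {..<n}
      | AllFunctions \<Rightarrow> True)"

datatype 'o ty = Base 'o | Arr "'o ty list" "'o ty"

fun ob :: "('o, 'm) cat \<Rightarrow> 'o ty \<Rightarrow> bool" where
  "ob A (Base x) \<longleftrightarrow> x \<in> Obj A"
| "ob A (Arr as a) \<longleftrightarrow> (\<forall>b\<in>set as. ob A b) \<and> ob A a"

datatype 'm dmor = AMor 'm | ArrMor "nat list" "'m dmor list" "'m dmor"

inductive dhom :: "cls \<Rightarrow> ('o, 'm) cat \<Rightarrow> 'm dmor \<Rightarrow> 'o ty \<Rightarrow> 'o ty \<Rightarrow> bool"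
  for c A where
  amor: "x \<in> Obj A \<Longrightarrow> y \<in> Obj A \<Longrightarrow> f \<in> Hom A x y
         \<Longrightarrow> dhom c A (AMor f) (Base x) (Base y)"
| arrmor: "\<forall>b\<in>set as. ob A b \<Longrightarrow> \<forall>b\<in>set as'. ob A b
         \<Longrightarrow> in_C c \<alpha> (length as) (length as') \<Longrightarrow> length fs = length as
         \<Longrightarrow> (\<forall>i<length as. dhom c A (fs ! i) (as' ! (\<alpha> ! i)) (as ! i))
         \<Longrightarrow> dhom c A f a a'
         \<Longrightarrow> dhom c A (ArrMor \<alpha> fs f) (Arr as a) (Arr as' a')"
  (* <alpha, fs> : as' \<rightarrow> as in S(D_A), f : a \<rightarrow> a' *)

definition shom :: "cls \<Rightarrow> ('o, 'm) cat \<Rightarrow> nat list \<times> 'm dmor list \<Rightarrow> 'o ty list \<Rightarrow> 'o ty list \<Rightarrow> bool" where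
  "shom c A \<phi> xs ys \<longleftrightarrow> (\<forall>b\<in>set xs. ob A b) \<and> (\<forall>b\<in>set ys. ob A b) \<and>
     in_C c (fst \<phi>) (length ys) (length xs) \<and> length (snd \<phi>) = length ys \<and>
     (\<forall>i<length ys. dhom c A (snd \<phi> ! i) (xs ! (fst \<phi> ! i)) (ys ! i))"

definition has_shom :: "cls \<Rightarrow> ('o, 'm) cat \<Rightarrow> 'o ty list \<Rightarrow> 'o ty list \<Rightarrow> bool" where
  "has_shom c A xs ys \<longleftrightarrow> (\<exists>\<phi>. shom c A \<phi> xs ys)"

text \<open>A context is a list of objects of S(D_A), one per variable (de Bruijn:
  index 0 = head of the list = most recently bound variable).\<close>

definition ctx_ok :: "('o, 'm) cat \<Rightarrow> 'o ty list list \<Rightarrow> bool" where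
  "ctx_ok A \<Delta> \<longleftrightarrow> (\<forall>as\<in>set \<Delta>. \<forall>b\<in>set as. ob A b)"

definition ctx_hom :: "cls \<Rightarrow> ('o, 'm) cat \<Rightarrow> 'o ty list list \<Rightarrow> 'o ty list list \<Rightarrow> bool" where
  "ctx_hom c A \<Delta> \<Delta>' \<longleftrightarrow> length \<Delta> = length \<Delta>' \<and>
     (\<forall>j<length \<Delta>. has_shom c A (\<Delta> ! j) (\<Delta>' ! j))"

definition ctx_tensor :: "nat \<Rightarrow> 'o ty list list list \<Rightarrow> 'o ty list list" where
  "ctx_tensor n \<Gamma>s = map (\<lambda>j. concat (map (\<lambda>\<Gamma>. \<Gamma> ! j) \<Gamma>s)) [0..<n]"

datatype tm = Var nat | Lam tm | App tm tm

fun lift :: "nat \<Rightarrow> tm \<Rightarrow> tm" where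
  "lift k (Var i) = (if i < k then Var i else Var (Suc i))"
| "lift k (Lam M) = Lam (lift (Suc k) M)"
| "lift k (App M N) = App (lift k M) (lift k N)"

text \<open>subst M k N = M[N/k], removing index k.\<close>
fun subst :: "tm \<Rightarrow> nat \<Rightarrow> tm \<Rightarrow> tm" where
  "subst (Var i) k N = (if i < k then Var i else if i = k then N else Var (i - 1))"
| "subst (Lam M) k N = Lam (subst M (Suc k) (lift 0 N))"
| "subst (App M1 M2) k N = App (subst M1 k N) (subst M2 k N)"

fun H :: "tm \<Rightarrow> tm" where
  "H (Var i) = Var i"
| "H (Lam M) = Lam (H M)"
| "H (App (Lam P) N) = subst P 0 N"
| "H (App M N) = App (H M) N"

definition head_red_ends :: "tm \<Rightarrow> bool" where
  "head_red_ends M \<longleftrightarrow> (\<exists>k. H ((H ^^ k) M) = (H ^^ k) M)"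

inductive typed :: "cls \<Rightarrow> ('o, 'm) cat \<Rightarrow> 'o ty list list \<Rightarrow> tm \<Rightarrow> 'o ty \<Rightarrow> bool"
  for c A where
  var: "i < length \<Delta> \<Longrightarrow> ctx_ok A \<Delta>
        \<Longrightarrow> (\<forall>j<length \<Delta>. j \<noteq> i \<longrightarrow> has_shom c A (\<Delta> ! j) [])
        \<Longrightarrow> has_shom c A (\<Delta> ! i) [a]
        \<Longrightarrow> typed c A \<Delta> (Var i) a"
| abs: "typed c A (as # \<Delta>) M a \<Longrightarrow> typed c A \<Delta> (Lam M) (Arr as a)"
| app: "typed c A \<Gamma>0 M (Arr as a) \<Longrightarrow> length \<Gamma>s = length as
        \<Longrightarrow> (\<forall>i<length as. typed c A (\<Gamma>s ! i) N (as ! i))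
        \<Longrightarrow> length \<Gamma>0 = length \<Delta> \<Longrightarrow> (\<forall>\<Gamma>\<in>set \<Gamma>s. length \<Gamma> = length \<Delta>)
        \<Longrightarrow> ctx_ok A \<Delta>
        \<Longrightarrow> ctx_hom c A \<Delta> (ctx_tensor (length \<Delta>) (\<Gamma>0 # \<Gamma>s))
        \<Longrightarrow> typed c A \<Delta> (App M N) a"

end

theory Submission
  imports Defs
begin

(* Tait-style reducibility. A base type denotes the head-normalising terms; a type
   <a1,...,ak> \<Rightarrow> a denotes the head-normalising M such that M N is reducible at a
   whenever N is reducible at every ai (the same argument serves all ai).
   Reducibility is transported along morphisms of D_A, because the map alpha of a
   morphism picks for each ai a component of the source list; it contains the
   neutral terms, in particular the variables, and it is closed under head
   expansion. Hence a typable term is reducible under every reducible parallel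
   substitution, and the identity substitution shows that it head-normalises.
   Neither the category axioms of A nor the class C of the maps alpha plays any role. *)

lemma lift_lift:
  "i \<le> k \<Longrightarrow> lift (Suc k) (lift i t) = lift i (lift k t)"
  by (induct t arbitrary: i k) auto

lemma lift_subst_ge [simp]:
  "j \<le> i \<Longrightarrow> lift i (subst t j s) = subst (lift (Suc i) t) j (lift i s)"
  by (induct t arbitrary: i j s) (auto simp: lift_lift split: nat.split)

lemma lift_subst_le:
  "i \<le> j \<Longrightarrow> lift i (subst t j s) = subst (lift i t) (Suc j) (lift i s)"
  by (induct t arbitrary: i j s) (auto simp: lift_lift)

lemma subst_lift [simp]: "subst (lift k t) k s = t"
  by (induct t arbitrary: k s) simp_all

lemma subst_subst:
  "i \<le> j \<Longrightarrow> subst (subst t (Suc j) (lift i v)) i (subst u j v) = subst (subst t i u) j v"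
proof (induct t arbitrary: i j u v)
  case (Lam t)
  have "lift 0 (lift i v) = lift (Suc i) (lift 0 v)"
    using lift_lift[of 0 i v] by simp
  moreover have "subst (lift 0 u) (Suc j) (lift 0 v) = lift 0 (subst u j v)"
    using lift_subst_le[of 0 j u v] by simp
  ultimately show ?case
    using Lam.hyps[of "Suc i" "Suc j" "lift 0 v" "lift 0 u"] Lam.prems by simp
qed (auto split: nat.split)

inductive has_head_redex :: "tm \<Rightarrow> bool" where
  redex: "has_head_redex (App (Lam P) Q)"
| App: "has_head_redex M \<Longrightarrow> has_head_redex (App M N)"
| Lam: "has_head_redex M \<Longrightarrow> has_head_redex (Lam M)"

lemma H_no_head_redex: "\<not> has_head_redex M \<Longrightarrow> H M = M"
proof (induct M)
  case (App M N)
  then show ?case by (cases M) (auto intro: has_head_redex.intros)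
qed (auto intro: has_head_redex.intros)

lemma has_head_redex_subst: "has_head_redex M \<Longrightarrow> has_head_redex (subst M k N)"
  by (induct M arbitrary: k N rule: has_head_redex.induct) (auto intro: has_head_redex.intros)

lemma H_subst: "has_head_redex M \<Longrightarrow> H (subst M k N) = subst (H M) k N"
proof (induct M arbitrary: k N rule: has_head_redex.induct)
  case (redex P Q)
  then show ?case using subst_subst[of 0 k P N Q] by simp
next
  case (App M N')
  then show ?case
    using subst_subst[of 0 k _ N N'] by (cases M) (auto elim: has_head_redex.cases)
qed simp

definition head_normalising :: "tm \<Rightarrow> bool" where
  "head_normalising M \<longleftrightarrow> (\<exists>n. \<not> has_head_redex ((H ^^ n) M))"

lemma head_red_ends_if_head_normalising: "head_normalising M \<Longrightarrow> head_red_ends M"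
  unfolding head_normalising_def head_red_ends_def using H_no_head_redex by blast

lemma head_normalising_HD: "head_normalising (H M) \<Longrightarrow> head_normalising M"
  unfolding head_normalising_def by (metis funpow_Suc_right o_apply)

lemma head_normalising_Lam: "head_normalising M \<Longrightarrow> head_normalising (Lam M)"
proof -
  have "(H ^^ n) (Lam M) = Lam ((H ^^ n) M)" for n
    by (induct n) auto
  then show "head_normalising M \<Longrightarrow> head_normalising (Lam M)"
    unfolding head_normalising_def by (auto elim: has_head_redex.cases)
qed

(* As long as M has a head redex, head reduction commutes with the substitution. *)
lemma head_normalising_substD: "head_normalising (subst M k N) \<Longrightarrow> head_normalising M"
proof (rule ccontr)
  assume hn: "head_normalising (subst M k N)" and "\<not> head_normalising M"
  then have redex: "has_head_redex ((H ^^ n) M)" for n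
    unfolding head_normalising_def by auto
  have "(H ^^ n) (subst M k N) = subst ((H ^^ n) M) k N" for n
    by (induct n) (auto simp: H_subst redex)
  then show False
    using hn redex has_head_redex_subst unfolding head_normalising_def by metis
qed

inductive neutral :: "tm \<Rightarrow> bool" where
  Var: "neutral (Var i)"
| App: "neutral M \<Longrightarrow> neutral (App M N)"

lemma neutral_head_normalising: "neutral M \<Longrightarrow> head_normalising M"
proof -
  assume "neutral M"
  then have "\<not> has_head_redex M"
    by induct (auto elim: has_head_redex.cases neutral.cases)
  then show ?thesis
    unfolding head_normalising_def by (metis funpow_0)
qed

inductive applied_redex :: "tm \<Rightarrow> bool" where
  redex: "applied_redex (App (Lam P) Q)"
| App: "applied_redex M \<Longrightarrow> applied_redex (App M N)"

lemma H_App_applied_redex: "applied_redex M \<Longrightarrow> H (App M N) = App (H M) N"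
  by (induct rule: applied_redex.induct) auto

fun reducible :: "'o ty \<Rightarrow> tm \<Rightarrow> bool" where
  "reducible (Base x) M \<longleftrightarrow> head_normalising M"
| "reducible (Arr as a) M \<longleftrightarrow> head_normalising M \<and>
     (\<forall>N. (\<forall>b\<in>set as. reducible b N) \<longrightarrow> reducible a (App M N))"

lemma reducible_head_normalising: "reducible a M \<Longrightarrow> head_normalising M"
  by (cases a) auto

lemma reducible_neutral: "neutral M \<Longrightarrow> reducible a M"
  by (induct a arbitrary: M) (auto simp: neutral_head_normalising neutral.App)

lemma reducible_head_expansion:
  "applied_redex M \<Longrightarrow> reducible a (H M) \<Longrightarrow> reducible a M"
  by (induct a arbitrary: M)
    (auto simp: head_normalising_HD H_App_applied_redex applied_redex.App)

lemma reducible_dhom: "dhom c A f a b \<Longrightarrow> reducible a M \<Longrightarrow> reducible b M"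
proof (induct arbitrary: M rule: dhom.induct)
  case (arrmor as as' \<alpha> fs f a a')
  have "reducible a (App M N)" if N: "\<forall>b\<in>set as'. reducible b N" for N
  proof -
    have "reducible (as ! i) N" if "i < length as" for i
      using arrmor.hyps(3,5) N that unfolding in_C_def by auto
    then have "\<forall>b\<in>set as. reducible b N"
      by (metis in_set_conv_nth)
    then show ?thesis
      using arrmor.prems by simp
  qed
  then show ?case
    using arrmor.prems arrmor.hyps(7) by simp
qed simp

lemma reducible_shom:
  assumes "shom c A \<phi> xs ys" and "\<forall>x\<in>set xs. reducible x M"
  shows "\<forall>y\<in>set ys. reducible y M"
proof
  fix y assume "y \<in> set ys"
  then obtain i where "i < length ys" "y = ys ! i"
    by (auto simp: in_set_conv_nth)
  with assms show "reducible y M"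
    unfolding shom_def in_C_def by (metis nth_mem reducible_dhom)
qed

definition subst_up :: "(nat \<Rightarrow> tm) \<Rightarrow> nat \<Rightarrow> tm" where
  "subst_up \<sigma> j = (case j of 0 \<Rightarrow> Var 0 | Suc j' \<Rightarrow> lift 0 (\<sigma> j'))"

definition subst_cons :: "tm \<Rightarrow> (nat \<Rightarrow> tm) \<Rightarrow> nat \<Rightarrow> tm" where
  "subst_cons N \<sigma> j = (case j of 0 \<Rightarrow> N | Suc j' \<Rightarrow> \<sigma> j')"

fun psubst :: "(nat \<Rightarrow> tm) \<Rightarrow> tm \<Rightarrow> tm" where
  "psubst \<sigma> (Var i) = \<sigma> i"
| "psubst \<sigma> (Lam M) = Lam (psubst (subst_up \<sigma>) M)"
| "psubst \<sigma> (App M N) = App (psubst \<sigma> M) (psubst \<sigma> N)"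

lemma psubst_Var: "psubst Var M = M"
proof -
  have "subst_up Var = Var"
    by (auto simp: subst_up_def fun_eq_iff split: nat.split)
  then show ?thesis by (induct M) auto
qed

lemma subst_psubst: "subst (psubst \<sigma> M) k N = psubst (\<lambda>j. subst (\<sigma> j) k N) M"
proof (induct M arbitrary: \<sigma> k N)
  case (Lam M)
  have "(\<lambda>j. subst (subst_up \<sigma> j) (Suc k) (lift 0 N)) = subst_up (\<lambda>j. subst (\<sigma> j) k N)"
    by (auto simp: subst_up_def fun_eq_iff lift_subst_le split: nat.split)
  then show ?case using Lam by simp
qed auto

lemma subst_psubst_subst_up: "subst (psubst (subst_up \<sigma>) M) 0 N = psubst (subst_cons N \<sigma>) M"
proof -
  have "(\<lambda>j. subst (subst_up \<sigma> j) 0 N) = subst_cons N \<sigma>"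
    by (auto simp: subst_up_def subst_cons_def fun_eq_iff split: nat.split)
  then show ?thesis by (simp add: subst_psubst)
qed

definition reducible_env :: "'o ty list list \<Rightarrow> (nat \<Rightarrow> tm) \<Rightarrow> bool" where
  "reducible_env \<Delta> \<sigma> \<longleftrightarrow> (\<forall>j<length \<Delta>. \<forall>b\<in>set (\<Delta> ! j). reducible b (\<sigma> j))"

lemma reducible_env_Cons:
  "reducible_env \<Delta> \<sigma> \<Longrightarrow> \<forall>b\<in>set as. reducible b N \<Longrightarrow> reducible_env (as # \<Delta>) (subst_cons N \<sigma>)"
  by (auto simp: reducible_env_def subst_cons_def nth_Cons split: nat.split)

lemma reducible_env_ctx_hom:
  "ctx_hom c A \<Delta> \<Delta>' \<Longrightarrow> reducible_env \<Delta> \<sigma> \<Longrightarrow> reducible_env \<Delta>' \<sigma>"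
  unfolding ctx_hom_def has_shom_def reducible_env_def by (metis reducible_shom)

lemma reducible_env_ctx_tensor:
  assumes "reducible_env (ctx_tensor n \<Gamma>s) \<sigma>" and "\<Gamma> \<in> set \<Gamma>s" and "length \<Gamma> = n"
  shows "reducible_env \<Gamma> \<sigma>"
  using assms unfolding reducible_env_def ctx_tensor_def by auto

lemma typed_reducible:
  "typed c A \<Delta> M a \<Longrightarrow> reducible_env \<Delta> \<sigma> \<Longrightarrow> reducible a (psubst \<sigma> M)"
proof (induct arbitrary: \<sigma> rule: typed.induct)
  case (var i \<Delta> a)
  then show ?case
    unfolding has_shom_def reducible_env_def using reducible_shom by fastforce
next
  case (abs as \<Delta> M a)
  let ?P = "psubst (subst_up \<sigma>) M"
  have beta: "reducible a (subst ?P 0 N)" if "\<forall>b\<in>set as. reducible b N" for N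
    using abs that by (simp add: subst_psubst_subst_up reducible_env_Cons)
  have "head_normalising (Lam ?P)"
    using beta[of "Var 0"]
    by (metis head_normalising_Lam head_normalising_substD neutral.Var
        reducible_head_normalising reducible_neutral)
  moreover have "reducible a (App (Lam ?P) N)" if "\<forall>b\<in>set as. reducible b N" for N
    using beta[OF that] by (simp add: reducible_head_expansion applied_redex.redex)
  ultimately show ?case by simp
next
  case (app \<Gamma>0 M as a \<Gamma>s N \<Delta>)
  have env: "reducible_env \<Gamma> \<sigma>" if "\<Gamma> \<in> set (\<Gamma>0 # \<Gamma>s)" for \<Gamma>
    using app.hyps(5,6,8) app.prems that
    by (metis reducible_env_ctx_hom reducible_env_ctx_tensor set_ConsD)
  have "reducible (Arr as a) (psubst \<sigma> M)"
    using app.hyps(2) env by simp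
  moreover have "reducible (as ! i) (psubst \<sigma> N)" if "i < length as" for i
    using app.hyps(3,4) env that by simp
  then have "\<forall>b\<in>set as. reducible b (psubst \<sigma> N)"
    by (metis in_set_conv_nth)
  ultimately show ?case by simp
qed

theorem lemma8:
  fixes c :: cls and A :: "('o, 'm) cat" and \<Delta> :: "'o ty list list"
    and M :: tm and a :: "'o ty"
  assumes "is_category A"
    and "typed c A \<Delta> M a"
  shows "head_red_ends M"
proof -
  have "reducible_env \<Delta> Var"
    by (simp add: reducible_env_def reducible_neutral neutral.Var)
  then have "reducible a (psubst Var M)"
    using typed_reducible[OF assms(2)] by blast
  then show ?thesis
    by (simp add: psubst_Var reducible_head_normalising head_red_ends_if_head_normalising)
qed

end
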